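(* Let $\Sigma$ be a finite disjoint union of compact connected one-dimensional Riemannian manifolds each having non-empty boundary, and let $g$ be a smooth positive function on $\Sigma$. Then $$\lambda(\Sigma,g)\geq \pi\left(\int_\Sigma g\right)^{-1}.$$
   Context: The weighted fundamental frequency is $$\lambda(\Sigma,g)=\inf_{\varphi}\left(\frac{\int_\Sigma |D\varphi|^2 g^{-1}}{\int_\Sigma\varphi^2 g}\right)^{1/2},$$ where $D\varphi$ is the derivative of $\varphi$ with respect to the arclength (inner metric) of $\Sigma$, integrals are with respect to arclength, and the infimum is over all Lipschitz functions $\varphi$ on $\Sigma$, not identically zero, with $\varphi=0$ on $\partial\Sigma$. *)

theory Defs
  imports "HOL-Analysis.Analysis"
begin

text \<open>Sigma is modelled (up to isometry) as a disjoint union of n closed intervals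
  [0, L i], i < n, each with arclength parametrisation. Functions on Sigma are families
  indexed by the component.\<close>

definition smooth_on_interval :: "real \<Rightarrow> real \<Rightarrow> (real \<Rightarrow> real) \<Rightarrow> bool" where
  "smooth_on_interval a b f \<longleftrightarrow>
     (\<exists>D :: nat \<Rightarrow> real \<Rightarrow> real.
        (\<forall>x\<in>{a..b}. D 0 x = f x) \<and>
        (\<forall>k. \<forall>x\<in>{a..b}. (D k has_real_derivative D (Suc k) x) (at x within {a..b})))"

definition admissible :: "nat \<Rightarrow> (nat \<Rightarrow> real) \<Rightarrow> (nat \<Rightarrow> real \<Rightarrow> real) \<Rightarrow> bool" where
  "admissible n L \<phi> \<longleftrightarrow>
     (\<forall>i<n. (\<exists>C. C-lipschitz_on {0..L i} (\<phi> i)) \<and> \<phi> i 0 = 0 \<and> \<phi> i (L i) = 0) \<and>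
     (\<exists>i<n. \<exists>x\<in>{0..L i}. \<phi> i x \<noteq> 0)"

definition weighted_fund_freq ::
  "nat \<Rightarrow> (nat \<Rightarrow> real) \<Rightarrow> (nat \<Rightarrow> real \<Rightarrow> real) \<Rightarrow> real" where
  "weighted_fund_freq n L g =
     Inf {sqrt ((\<Sum>i<n. integral {0..L i}
                    (\<lambda>x. (vector_derivative (\<phi> i) (at x within {0..L i}))\<^sup>2 / g i x))
              / (\<Sum>i<n. integral {0..L i} (\<lambda>x. (\<phi> i x)\<^sup>2 * g i x)))
          | \<phi>. admissible n L \<phi>}"

end

theory Submission
  imports Defs
begin

text \<open>
  Fix one component \<open>[a, b]\<close> and \<open>0 < k\<close> with \<open>k \<integral>\<^sub>a\<^sup>b g < \<pi>\<close>. The function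
  \<open>h = k tan (k \<integral>\<^sub>a\<^sup>x g - k \<integral>\<^sub>a\<^sup>b g / 2)\<close> solves the Riccati equation \<open>h' = g (k\<^sup>2 + h\<^sup>2)\<close>
  on all of \<open>[a, b]\<close>, and Picone's identity gives, wherever \<open>\<phi>\<close> is differentiable,
  \<open>\<phi>'\<^sup>2 / g - k\<^sup>2 \<phi>\<^sup>2 g + (h \<phi>\<^sup>2)' = (\<phi>' + g h \<phi>)\<^sup>2 / g \<ge> 0\<close>. Since \<open>\<phi>\<close> vanishes at
  \<open>a\<close> and \<open>b\<close>, \<open>(h \<phi>\<^sup>2)'\<close> integrates to zero, so \<open>k\<^sup>2 \<integral> \<phi>\<^sup>2 g \<le> \<integral> \<phi>'\<^sup>2 / g\<close>; letting
  \<open>k \<rightarrow> \<pi> / \<integral> g\<close> and using \<open>\<integral>\<^sub>a\<^sup>b g \<le> \<integral>\<^sub>\<Sigma> g\<close> on every component gives the bound.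

  The energy is built from the pointwise derivative of a Lipschitz test function, so the
  argument needs the fundamental theorem of calculus for Lipschitz functions, i.e.\ Lebesgue's
  theorem that they are differentiable almost everywhere. For a monotone Lipschitz \<open>F\<close> and
  rationals \<open>0 < p < q\<close>, the points where the right difference quotients are frequently
  above \<open>q\<close> and the left ones frequently below \<open>p\<close> satisfy \<open>q \<lambda>(E) \<le> p \<lambda>(U)\<close> for every
  open \<open>U \<supseteq> E\<close> (two Vitali coverings by intervals, compared through the Lebesgue--Stieltjes
  measure of \<open>F\<close>), hence form a null set.
\<close>

section \<open>Lipschitz functions are differentiable almost everywhere\<close>

lemma Vitali_covering_intervals:
  fixes S :: "real set" and P :: "real \<Rightarrow> real \<Rightarrow> bool"
  assumes "\<And>x d. x \<in> S \<Longrightarrow> 0 < d \<Longrightarrow> \<exists>a b. x \<in> {a..b} \<and> a < b \<and> b - a < d \<and> P a b"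
  obtains C where "countable C" "\<And>a b. (a, b) \<in> C \<Longrightarrow> a < b \<and> P a b"
    "disjoint_family_on (\<lambda>(a, b). {a..b}) C" "negligible (S - (\<Union>(a, b)\<in>C. {a..b}))"
proof -
  define K where "K = {(a, b). a < b \<and> P a b}"
  define c where "c = (\<lambda>(a::real, b::real). (a + b) / 2)"
  define r where "r = (\<lambda>(a::real, b::real). (b - a) / 2)"
  have cball_eq: "cball (c i) (r i) = {fst i..snd i}" for i
    by (cases i) (simp add: c_def r_def cball_eq_atLeastAtMost field_simps)
  have cover: "\<exists>i. i \<in> K \<and> x \<in> cball (c i) (r i) \<and> r i < d" if x: "x \<in> S" and d: "0 < d" for x d
  proof -
    obtain a b where "x \<in> {a..b}" "a < b" "b - a < 2 * d" "P a b"
      using assms[OF x, of "2 * d"] d by auto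
    then show ?thesis
      unfolding cball_eq by (intro exI[of _ "(a, b)"]) (auto simp: K_def r_def)
  qed
  have r_pos: "0 < r i" if "i \<in> K" for i using that by (auto simp: K_def r_def)
  obtain C where "countable C" "C \<subseteq> K"
    "pairwise (\<lambda>i j. disjnt (cball (c i) (r i)) (cball (c j) (r j))) C"
    "negligible (S - (\<Union>i\<in>C. cball (c i) (r i)))"
    by (rule Vitali_covering_theorem_cballs[of K r S c, OF r_pos cover]) blast+
  note C = this
  show ?thesis
  proof (rule that[of C])
    show "a < b \<and> P a b" if "(a, b) \<in> C" for a b using that C(2) by (auto simp: K_def)
    show "disjoint_family_on (\<lambda>(a, b). {a..b}) C"
      using C(3) unfolding disjoint_family_on_def pairwise_def disjnt_def cball_eq
      by (simp add: case_prod_beta)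
    show "negligible (S - (\<Union>(a, b)\<in>C. {a..b}))"
      using C(4) unfolding cball_eq by (simp add: case_prod_beta)
  qed (rule C(1))
qed

lemma emeasure_disjoint_UN_le:
  assumes "countable I" "disjoint_family_on A I" "A ` I \<subseteq> sets M" "A ` I \<subseteq> sets N"
    and "\<And>i. i \<in> I \<Longrightarrow> emeasure M (A i) \<le> emeasure N (A i)"
  shows "emeasure M (\<Union>i\<in>I. A i) \<le> emeasure N (\<Union>i\<in>I. A i)"
proof -
  have "emeasure M (\<Union>i\<in>I. A i) = (\<integral>\<^sup>+i. emeasure M (A i) \<partial>count_space I)"
    using assms(1-3) by (intro emeasure_UN_countable) auto
  also have "\<dots> \<le> (\<integral>\<^sup>+i. emeasure N (A i) \<partial>count_space I)"
    using assms(5) by (intro nn_integral_mono) auto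
  also have "\<dots> = emeasure N (\<Union>i\<in>I. A i)"
    using assms(1,2,4) by (intro emeasure_UN_countable[symmetric]) auto
  finally show ?thesis .
qed

lemma negligible_countable_real:
  fixes A :: "real set"
  assumes "countable A" shows "negligible A"
  using countable_imp_null_set_lborel[OF assms] null_sets_completionI[of A lborel]
  by (simp add: negligible_iff_null_sets)

lemma frequently_at_right_0_real:
  "(\<exists>\<^sub>F h in at_right 0. P h) \<longleftrightarrow> (\<forall>d>0. \<exists>h. 0 < h \<and> h < (d::real) \<and> P h)"
  by (simp add: frequently_def eventually_at_right_field)

definition dini_gap :: "(real \<Rightarrow> real) \<Rightarrow> real \<Rightarrow> real \<Rightarrow> real set" where
  "dini_gap F p q = {x. (\<exists>\<^sub>F h in at_right 0. q < (F (x + h) - F x) / h) \<and>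
                        (\<exists>\<^sub>F h in at_right 0. (F x - F (x - h)) / h < p)}"

lemma left_slow_interval_cover:
  fixes F :: "real \<Rightarrow> real"
  assumes E: "E \<subseteq> {x. \<exists>\<^sub>F h in at_right 0. (F x - F (x - h)) / h < p}" "E \<subseteq> U" and U: "open U"
  obtains C where "countable C"
    "\<And>a b. (a, b) \<in> C \<Longrightarrow> a < b \<and> {a..b} \<subseteq> U \<and> F b - F a < p * (b - a)"
    "disjoint_family_on (\<lambda>(a, b). {a..b}) C" "negligible (E - (\<Union>(a, b)\<in>C. {a..b}))"
proof (rule Vitali_covering_intervals)
  fix x d :: real assume x: "x \<in> E" and d: "0 < d"
  obtain \<epsilon> where \<epsilon>: "0 < \<epsilon>" "ball x \<epsilon> \<subseteq> U" using U E(2) x openE by blast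
  have "\<exists>\<^sub>F h in at_right 0. (F x - F (x - h)) / h < p" using E(1) x by auto
  then obtain h where h: "0 < h" "h < min d \<epsilon>" "(F x - F (x - h)) / h < p"
    using d \<epsilon>(1) unfolding frequently_at_right_0_real by (meson min_less_iff_conj)
  then have "F x - F (x - h) < p * h" by (simp add: pos_divide_less_eq)
  moreover have "{x - h..x} \<subseteq> ball x \<epsilon>" using h by (auto simp: dist_real_def)
  ultimately show "\<exists>a b. x \<in> {a..b} \<and> a < b \<and> b - a < d \<and> {a..b} \<subseteq> U \<and> F b - F a < p * (b - a)"
    using h \<epsilon> by (intro exI[of _ "x - h"] exI[of _ x]) auto
qed blast

lemma right_fast_interval_cover:
  fixes F :: "real \<Rightarrow> real"
  assumes E: "E \<subseteq> {x. \<exists>\<^sub>F h in at_right 0. q < (F (x + h) - F x) / h}" "E \<subseteq> U" and U: "open U"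
  obtains C where "countable C"
    "\<And>a b. (a, b) \<in> C \<Longrightarrow> a < b \<and> {a..b} \<subseteq> U \<and> q * (b - a) < F b - F a"
    "disjoint_family_on (\<lambda>(a, b). {a..b}) C" "negligible (E - (\<Union>(a, b)\<in>C. {a..b}))"
proof (rule Vitali_covering_intervals)
  fix x d :: real assume x: "x \<in> E" and d: "0 < d"
  obtain \<epsilon> where \<epsilon>: "0 < \<epsilon>" "ball x \<epsilon> \<subseteq> U" using U E(2) x openE by blast
  have "\<exists>\<^sub>F h in at_right 0. q < (F (x + h) - F x) / h" using E(1) x by auto
  then obtain h where h: "0 < h" "h < min d \<epsilon>" "q < (F (x + h) - F x) / h"
    using d \<epsilon>(1) unfolding frequently_at_right_0_real by (meson min_less_iff_conj)
  then have "q * h < F (x + h) - F x" by (simp add: pos_less_divide_eq)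
  moreover have "{x..x + h} \<subseteq> ball x \<epsilon>" using h by (auto simp: dist_real_def)
  ultimately show "\<exists>a b. x \<in> {a..b} \<and> a < b \<and> b - a < d \<and> {a..b} \<subseteq> U \<and> q * (b - a) < F b - F a"
    using h \<epsilon> by (intro exI[of _ x] exI[of _ "x + h"]) auto
qed blast

lemma negligible_intervals_Diff_interiors:
  assumes "countable C"
  shows "negligible ((\<Union>(a, b)\<in>C. {a..b}) - (\<Union>(a, b)\<in>C. {a<..<b::real}))"
proof (rule negligible_subset)
  show "negligible (fst ` C \<union> snd ` C)"
    using assms by (intro negligible_countable_real) auto
  show "(\<Union>(a, b)\<in>C. {a..b}) - (\<Union>(a, b)\<in>C. {a<..<b}) \<subseteq> fst ` C \<union> snd ` C"
  proof
    fix x assume "x \<in> (\<Union>(a, b)\<in>C. {a..b}) - (\<Union>(a, b)\<in>C. {a<..<b})"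
    then obtain a b where "(a, b) \<in> C" "x \<in> {a..b}" "x \<notin> {a<..<b}" by auto
    then show "x \<in> fst ` C \<union> snd ` C" by (auto intro: rev_image_eqI)
  qed
qed

lemma emeasure_le_if_negligible_Diff:
  assumes "negligible (E - T)" "T \<in> sets lebesgue"
  shows "emeasure lebesgue E \<le> emeasure lebesgue T"
proof -
  have N: "E - T \<in> null_sets lebesgue" using assms(1) by (simp add: negligible_iff_null_sets)
  have "emeasure lebesgue E \<le> emeasure lebesgue (T \<union> (E - T))"
    by (rule emeasure_mono[OF _ sets.Un[OF assms(2) null_setsD2[OF N]]]) blast
  also have "\<dots> = emeasure lebesgue T" using assms(2) N by (rule emeasure_Un_null_set)
  finally show ?thesis .
qed

lemma interval_measure_intervals_le:
  fixes F :: "real \<Rightarrow> real"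
  assumes F: "mono F" "continuous_on UNIV F" and p: "0 \<le> p"
    and C: "countable C" "disjoint_family_on (\<lambda>(a, b). {a..b}) C"
      "\<And>a b. (a, b) \<in> C \<Longrightarrow> a < b \<and> F b - F a \<le> p * (b - a)"
  shows "emeasure (interval_measure F) (\<Union>(a, b)\<in>C. {a..b})
    \<le> ennreal p * emeasure lebesgue (\<Union>(a, b)\<in>C. {a..b})"
proof -
  have "emeasure (interval_measure F) (\<Union>(a, b)\<in>C. {a..b})
      \<le> emeasure (scale_measure p lebesgue) (\<Union>(a, b)\<in>C. {a..b})"
  proof (rule emeasure_disjoint_UN_le[OF C(1,2)])
    fix i assume "i \<in> C"
    then obtain a b where "i = (a, b)" "a < b" "F b - F a \<le> p * (b - a)" using C(3)
      by (cases i) auto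
    then show "emeasure (interval_measure F) ((\<lambda>(a, b). {a..b}) i)
        \<le> emeasure (scale_measure p lebesgue) ((\<lambda>(a, b). {a..b}) i)"
      using p F
      by (simp add: emeasure_interval_measure_Icc monoD ennreal_mult[symmetric] ennreal_leI)
  qed auto
  then show ?thesis by simp
qed

lemma interval_measure_intervals_ge:
  fixes F :: "real \<Rightarrow> real"
  assumes F: "mono F" "continuous_on UNIV F" and q: "0 \<le> q"
    and C: "countable C" "disjoint_family_on (\<lambda>(a, b). {a..b}) C"
      "\<And>a b. (a, b) \<in> C \<Longrightarrow> a < b \<and> q * (b - a) \<le> F b - F a"
  shows "ennreal q * emeasure lebesgue (\<Union>(a, b)\<in>C. {a..b})
    \<le> emeasure (interval_measure F) (\<Union>(a, b)\<in>C. {a..b})"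
proof -
  have "emeasure (scale_measure q lebesgue) (\<Union>(a, b)\<in>C. {a..b})
      \<le> emeasure (interval_measure F) (\<Union>(a, b)\<in>C. {a..b})"
  proof (rule emeasure_disjoint_UN_le[OF C(1,2)])
    fix i assume "i \<in> C"
    then obtain a b where "i = (a, b)" "a < b" "q * (b - a) \<le> F b - F a" using C(3)
      by (cases i) auto
    then show "emeasure (scale_measure q lebesgue) ((\<lambda>(a, b). {a..b}) i)
        \<le> emeasure (interval_measure F) ((\<lambda>(a, b). {a..b}) i)"
      using q F
      by (simp add: emeasure_interval_measure_Icc monoD ennreal_mult[symmetric] ennreal_leI)
  qed auto
  then show ?thesis by simp
qed

lemma dini_gap_emeasure_le_open:
  fixes F :: "real \<Rightarrow> real"
  assumes F: "mono F" "continuous_on UNIV F" and pq: "0 \<le> p" "0 \<le> q"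
    and E: "E \<subseteq> dini_gap F p q" "E \<subseteq> U" and U: "open U"
  shows "ennreal q * emeasure lebesgue E \<le> ennreal p * emeasure lebesgue U"
proof -
  have UN_sets: "(\<Union>(a, b)\<in>C. {a..b::real}) \<in> sets borel" "(\<Union>(a, b)\<in>C. {a..b}) \<in> sets lebesgue"
    if "countable C" for C
    using that by (auto intro!: sets.countable_UN'' split: prod.split)
  obtain C1 where C1: "countable C1"
      "\<And>a b. (a, b) \<in> C1 \<Longrightarrow> a < b \<and> {a..b} \<subseteq> U \<and> F b - F a < p * (b - a)"
      "disjoint_family_on (\<lambda>(a, b). {a..b}) C1" "negligible (E - (\<Union>(a, b)\<in>C1. {a..b}))"
    using left_slow_interval_cover[of E F p U] E U by (auto simp: dini_gap_def)
  define V where "V = (\<Union>(a, b)\<in>C1. {a<..<b})"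
  have "open V" by (auto simp: V_def split: prod.split)
  then obtain C2 where C2: "countable C2"
      "\<And>a b. (a, b) \<in> C2 \<Longrightarrow> a < b \<and> {a..b} \<subseteq> V \<and> q * (b - a) < F b - F a"
      "disjoint_family_on (\<lambda>(a, b). {a..b}) C2" "negligible (E \<inter> V - (\<Union>(a, b)\<in>C2. {a..b}))"
    using right_fast_interval_cover[of "E \<inter> V" q F V] E by (auto simp: dini_gap_def)
  have C2_V: "(\<Union>(a, b)\<in>C2. {a..b}) \<subseteq> V"
    using C2(2) by (intro UN_least) (auto split: prod.split)
  have V_C1: "V \<subseteq> (\<Union>(a, b)\<in>C1. {a..b})"
    unfolding V_def by (intro UN_mono) auto
  have C1_U: "(\<Union>(a, b)\<in>C1. {a..b}) \<subseteq> U"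
    using C1(2) by (intro UN_least) (auto split: prod.split)
  have "negligible ((E \<inter> V - (\<Union>(a, b)\<in>C2. {a..b})) \<union>
      (E - (\<Union>(a, b)\<in>C1. {a..b})) \<union> ((\<Union>(a, b)\<in>C1. {a..b}) - V))"
    using C1(4) C2(4) negligible_intervals_Diff_interiors[OF C1(1)] by (simp add: V_def)
  moreover have "E - (\<Union>(a, b)\<in>C2. {a..b}) \<subseteq> (E \<inter> V - (\<Union>(a, b)\<in>C2. {a..b})) \<union>
      (E - (\<Union>(a, b)\<in>C1. {a..b})) \<union> ((\<Union>(a, b)\<in>C1. {a..b}) - V)"
    by blast
  ultimately have "negligible (E - (\<Union>(a, b)\<in>C2. {a..b}))" by (rule negligible_subset)
  then have "ennreal q * emeasure lebesgue E \<le> ennreal q * emeasure lebesgue (\<Union>(a, b)\<in>C2. {a..b})"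
    using UN_sets[OF C2(1)] by (intro mult_left_mono emeasure_le_if_negligible_Diff) auto
  also have "\<dots> \<le> emeasure (interval_measure F) (\<Union>(a, b)\<in>C2. {a..b})"
    using C2 by (intro interval_measure_intervals_ge[OF F pq(2)]) (auto intro: less_imp_le)
  also have "\<dots> \<le> emeasure (interval_measure F) (\<Union>(a, b)\<in>C1. {a..b})"
    using C2_V V_C1 UN_sets[OF C1(1)] by (intro emeasure_mono) auto
  also have "\<dots> \<le> ennreal p * emeasure lebesgue (\<Union>(a, b)\<in>C1. {a..b})"
    using C1 by (intro interval_measure_intervals_le[OF F pq(1)]) (auto intro: less_imp_le)
  also have "\<dots> \<le> ennreal p * emeasure lebesgue U"
    using C1_U U by (intro mult_left_mono emeasure_mono) auto
  finally show ?thesis .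
qed

lemma frequently_at_right_0_rat:
  fixes f :: "real \<Rightarrow> real"
  assumes f: "continuous_on {0<..} f"
  shows "(\<exists>\<^sub>F h in at_right 0. 0 < f h) \<longleftrightarrow> (\<forall>n::nat. \<exists>h\<in>\<rat>. 0 < h \<and> h < 1 / Suc n \<and> 0 < f h)"
proof
  assume "\<exists>\<^sub>F h in at_right 0. 0 < f h"
  show "\<forall>n::nat. \<exists>h\<in>\<rat>. 0 < h \<and> h < 1 / Suc n \<and> 0 < f h"
  proof
    fix n :: nat
    have "\<forall>d>0. \<exists>h. 0 < h \<and> h < d \<and> 0 < f h"
      using \<open>\<exists>\<^sub>F h in at_right 0. 0 < f h\<close> unfolding frequently_at_right_0_real .
    from this[rule_format, of "1 / Suc n"] obtain h where h: "0 < h" "h < 1 / Suc n" "0 < f h"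
      by auto
    have "continuous_on {0<..<1 / Suc n} f" using f by (rule continuous_on_subset) auto
    then have "open ({0<..<1 / Suc n} \<inter> f -` {0<..})"
      by (intro continuous_open_preimage) auto
    moreover have "{0<..<1 / Suc n} \<inter> f -` {0<..} \<inter> closure \<rat> \<noteq> {}"
      using h by (auto simp: Rats_closure_real)
    ultimately have "{0<..<1 / Suc n} \<inter> f -` {0<..} \<inter> \<rat> \<noteq> {}"
      by (simp add: open_Int_closure_eq_empty)
    then show "\<exists>h\<in>\<rat>. 0 < h \<and> h < 1 / Suc n \<and> 0 < f h" by auto
  qed
next
  assume rat: "\<forall>n::nat. \<exists>h\<in>\<rat>. 0 < h \<and> h < 1 / Suc n \<and> 0 < f h"
  show "\<exists>\<^sub>F h in at_right 0. 0 < f h"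
    unfolding frequently_at_right_0_real
  proof (intro allI impI)
    fix d :: real assume "0 < d"
    then obtain n :: nat where n: "1 / Suc n < d" using nat_approx_posE by blast
    obtain h where "h \<in> \<rat>" "0 < h" "h < 1 / Suc n" "0 < f h" using rat by blast
    with n show "\<exists>h. 0 < h \<and> h < d \<and> 0 < f h" by (intro exI[of _ h]) simp
  qed
qed

lemma sets_borel_frequently_at_right_0:
  fixes f :: "real \<Rightarrow> real \<Rightarrow> real"
  assumes "\<And>x. continuous_on {0<..} (f x)" and "\<And>h. continuous_on UNIV (\<lambda>x. f x h)"
  shows "{x. \<exists>\<^sub>F h in at_right 0. 0 < f x h} \<in> sets borel"
proof -
  have "{x. \<exists>\<^sub>F h in at_right 0. 0 < f x h} =
      (\<Inter>n::nat. \<Union>h\<in>\<rat> \<inter> {0<..<1 / Suc n}. {x. 0 < f x h})"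
    unfolding frequently_at_right_0_rat[OF assms(1)] by (auto simp: Bex_def)
  also have "\<dots> \<in> sets borel"
  proof (intro sets.countable_INT'' sets.countable_UN'' borel_open)
    show "countable (\<rat> \<inter> {0<..<1 / Suc n})" for n
      by (rule countable_subset[OF _ countable_rat]) auto
    show "open {x. 0 < f x h}" for h
      using assms(2) by (intro open_Collect_less continuous_on_const)
  qed auto
  finally show ?thesis .
qed

lemma dini_gap_borel:
  fixes F :: "real \<Rightarrow> real"
  assumes F: "continuous_on UNIV F"
  shows "dini_gap F p q \<in> sets borel"
proof -
  have F_comp: "continuous_on A (\<lambda>y. F (g y))" if "continuous_on A g" for A g
    using continuous_on_compose2[OF F that] by simp
  have "dini_gap F p q = {x. \<exists>\<^sub>F h in at_right 0. 0 < (F (x + h) - F x) * inverse h - q} \<inter>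
      {x. \<exists>\<^sub>F h in at_right 0. 0 < p - (F x - F (x - h)) * inverse h}"
    by (simp add: dini_gap_def divide_inverse Collect_conj_eq)
  also have "\<dots> \<in> sets borel"
    by (intro sets.Int sets_borel_frequently_at_right_0 F_comp continuous_intros) auto
  finally show ?thesis .
qed

lemma negligible_lmeasurable_dini_gap_subset:
  fixes F :: "real \<Rightarrow> real"
  assumes F: "mono F" "continuous_on UNIV F" and pq: "0 < p" "p < q"
    and E: "E \<in> lmeasurable" "E \<subseteq> dini_gap F p q"
  shows "negligible E"
proof -
  define m where "m = measure lebesgue E"
  have m: "0 \<le> m" "emeasure lebesgue E = ennreal m"
    using E(1) by (simp_all add: m_def emeasure_eq_measure2)
  have "q * m \<le> p * m + e" if e: "0 < e" for e
  proof -
    obtain U where U: "open U" "E \<subseteq> U" "U - E \<in> lmeasurable"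
        "emeasure lebesgue (U - E) < ennreal (e / p)"
      using sets_lebesgue_outer_open[of E "e / p"] E(1) e pq(1) by (auto simp: fmeasurableD)
    have "emeasure lebesgue U \<le> emeasure lebesgue E + emeasure lebesgue (U - E)"
      using emeasure_subadditive[of E lebesgue "U - E"] E(1) U(2,3)
      by (simp add: fmeasurableD Un_absorb1)
    also have "\<dots> \<le> ennreal m + ennreal (e / p)"
      using U(4) m(2) by simp
    finally have "ennreal p * emeasure lebesgue U \<le> ennreal p * (ennreal m + ennreal (e / p))"
      by (rule mult_left_mono) simp
    with dini_gap_emeasure_le_open[OF F _ _ E(2) U(2,1)] pq m(2)
    have "ennreal (q * m) \<le> ennreal (p * (m + e / p))"
      using e m(1) by (simp add: ennreal_mult)
    moreover have "0 \<le> p * (m + e / p)" using pq e m(1) by simp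
    ultimately have "q * m \<le> p * (m + e / p)" by simp
    then show ?thesis using pq by (simp add: distrib_left)
  qed
  then have "q * m \<le> p * m" by (rule field_le_epsilon)
  then have "m = 0" using pq m(1) by (simp add: mult_le_cancel_right)
  with E(1) show ?thesis by (simp add: m_def negligible_iff_measure0)
qed

lemma negligible_dini_gap:
  fixes F :: "real \<Rightarrow> real"
  assumes F: "mono F" "continuous_on UNIV F" and pq: "0 < p" "p < q"
  shows "negligible (dini_gap F p q)"
proof -
  have "dini_gap F p q \<in> sets lebesgue"
    using dini_gap_borel[OF F(2)] by (metis sets_completionI_sets sets_lborel)
  then have "ball 0 (real k) \<inter> dini_gap F p q \<in> lmeasurable" for k :: nat
    by (intro fmeasurable_Int_fmeasurable) simp_all
  then have "negligible (\<Union>k. ball 0 (real k) \<inter> dini_gap F p q)"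
    by (intro negligible_Union_nat negligible_lmeasurable_dini_gap_subset[OF F pq]) auto
  moreover have "dini_gap F p q \<subseteq> (\<Union>k. ball 0 (real k) \<inter> dini_gap F p q)"
    using reals_Archimedean2 by (force simp: dist_real_def)
  ultimately show ?thesis by (rule negligible_subset)
qed

lemma less_Limsup_frequently:
  fixes f :: "'a \<Rightarrow> 'b::complete_linorder"
  assumes "c < Limsup F f" shows "\<exists>\<^sub>F x in F. c < f x"
proof (rule ccontr)
  assume "\<not> (\<exists>\<^sub>F x in F. c < f x)"
  then have "eventually (\<lambda>x. f x \<le> c) F" by (simp add: not_frequently not_less)
  then have "Limsup F f \<le> c" by (rule Limsup_bounded)
  with assms show False by simp
qed

lemma Liminf_less_frequently:
  fixes f :: "'a \<Rightarrow> 'b::complete_linorder"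
  assumes "Liminf F f < c" shows "\<exists>\<^sub>F x in F. f x < c"
proof (rule ccontr)
  assume "\<not> (\<exists>\<^sub>F x in F. f x < c)"
  then have "eventually (\<lambda>x. c \<le> f x) F" by (simp add: not_frequently not_less)
  then have "c \<le> Liminf F f" by (rule Liminf_bounded)
  with assms show False by simp
qed

lemma Limsup_le_Liminf_of_rat_gaps:
  fixes A B :: "'a \<Rightarrow> real"
  assumes B_nonneg: "eventually (\<lambda>h. 0 \<le> B h) F"
    and gaps: "\<And>p q. p \<in> \<rat> \<Longrightarrow> q \<in> \<rat> \<Longrightarrow> 0 < p \<Longrightarrow> p < q \<Longrightarrow>
      \<not> ((\<exists>\<^sub>F h in F. q < A h) \<and> (\<exists>\<^sub>F h in F. B h < p))"
  shows "Limsup F (\<lambda>h. ereal (A h)) \<le> Liminf F (\<lambda>h. ereal (B h))"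
proof (rule ccontr)
  let ?U = "Limsup F (\<lambda>h. ereal (A h))" and ?u = "Liminf F (\<lambda>h. ereal (B h))"
  assume "\<not> ?U \<le> ?u"
  then obtain q where q: "?u < ereal (real_of_rat q)" "ereal (real_of_rat q) < ?U"
    using ereal_dense3[of ?u ?U] by (meson not_le)
  then obtain p where
    p: "?u < ereal (real_of_rat p)" "ereal (real_of_rat p) < ereal (real_of_rat q)"
    using ereal_dense3[of ?u "ereal (real_of_rat q)"] by auto
  have "0 \<le> ?u" using B_nonneg by (intro Liminf_bounded) (auto elim: eventually_mono)
  then have "0 < ereal (real_of_rat p)" using p(1) by (rule le_less_trans)
  moreover have "\<exists>\<^sub>F h in F. real_of_rat q < A h"
    using less_Limsup_frequently[OF q(2)] by simp
  moreover have "\<exists>\<^sub>F h in F. B h < real_of_rat p"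
    using Liminf_less_frequently[OF p(1)] by simp
  ultimately show False using gaps[of "real_of_rat p" "real_of_rat q"] p(2) by simp
qed

lemma tendsto_common_of_Limsup_le_Liminf:
  fixes R L :: "'a \<Rightarrow> real"
  assumes F: "F \<noteq> bot"
    and RL: "Limsup F (\<lambda>h. ereal (R h)) \<le> Liminf F (\<lambda>h. ereal (L h))"
    and LR: "Limsup F (\<lambda>h. ereal (L h)) \<le> Liminf F (\<lambda>h. ereal (R h))"
    and bounded: "eventually (\<lambda>h. 0 \<le> R h \<and> R h \<le> B) F"
  obtains D where "(R \<longlongrightarrow> D) F" "(L \<longlongrightarrow> D) F"
proof -
  let ?R = "\<lambda>h. ereal (R h)" and ?L = "\<lambda>h. ereal (L h)"
  have eq: "Liminf F ?R = Limsup F ?R" "Liminf F ?L = Limsup F ?R" "Limsup F ?L = Limsup F ?R"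
    using RL LR Liminf_le_Limsup[OF F, of ?R] Liminf_le_Limsup[OF F, of ?L] by auto
  have "0 \<le> Liminf F ?R" using bounded by (intro Liminf_bounded) (auto elim: eventually_mono)
  moreover have "Limsup F ?R \<le> ereal B" using bounded
    by (intro Limsup_bounded) (auto elim: eventually_mono)
  ultimately obtain D where D: "Limsup F ?R = ereal D" using eq(1) by (cases "Limsup F ?R") auto
  show ?thesis
  proof
    show "(R \<longlongrightarrow> D) F" "(L \<longlongrightarrow> D) F"
      using eq D by (simp_all add: tendsto_iff_Liminf_eq_Limsup[OF F] flip: lim_ereal)
  qed
qed

lemma DERIV_of_one_sided_quotients:
  fixes G :: "real \<Rightarrow> real"
  assumes "((\<lambda>h. (G (x + h) - G x) / h) \<longlongrightarrow> D) (at_right 0)"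
    and "((\<lambda>h. (G x - G (x - h)) / h) \<longlongrightarrow> D) (at_right 0)"
  shows "(G has_real_derivative D) (at x)"
proof -
  let ?Q = "\<lambda>y. (G y - G x) / (y - x)"
  have "(\<lambda>h. ?Q (h + x)) = (\<lambda>h. (G (x + h) - G x) / h)" by (simp add: add.commute)
  then have "(?Q \<longlongrightarrow> D) (at_right x)"
    using assms(1) by (simp add: filterlim_at_right_to_0[of ?Q _ x])
  moreover have "(\<lambda>h. ?Q (- (h + - x))) = (\<lambda>h. (G x - G (x - h)) / h)"
    by (rule ext) (simp add: minus_divide_left)
  then have "(?Q \<longlongrightarrow> D) (at_left x)"
    using assms(2)
    by (simp add: filterlim_at_left_to_right[of ?Q _ x]
        filterlim_at_right_to_0[of "\<lambda>y. ?Q (- y)" _ "-x"])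
  ultimately have "(?Q \<longlongrightarrow> D) (at x)" by (simp add: filterlim_at_split)
  then show ?thesis by (simp add: has_field_derivative_iff)
qed

lemma mono_lipschitz_DERIV_off_dini_gaps:
  fixes G :: "real \<Rightarrow> real"
  assumes G: "mono G" "B-lipschitz_on UNIV G"
    and right: "\<And>p q. p \<in> \<rat> \<Longrightarrow> q \<in> \<rat> \<Longrightarrow> 0 < p \<Longrightarrow> p < q \<Longrightarrow> x \<notin> dini_gap G p q"
    and left: "\<And>p q. p \<in> \<rat> \<Longrightarrow> q \<in> \<rat> \<Longrightarrow> 0 < p \<Longrightarrow> p < q \<Longrightarrow>
      -x \<notin> dini_gap (\<lambda>y. - G (- y)) p q"
  shows "\<exists>D. (G has_real_derivative D) (at x)"
proof -
  define R where "R h = (G (x + h) - G x) / h" for h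
  define L where "L h = (G x - G (x - h)) / h" for h
  have quotient_bounds: "0 \<le> (G b - G a) / (b - a) \<and> (G b - G a) / (b - a) \<le> B" if "a < b" for a b
  proof -
    have "G a \<le> G b" using G(1) that by (simp add: monoD)
    moreover have "G b - G a \<le> B * (b - a)"
      using lipschitz_onD[OF G(2), of b a] that by (simp add: dist_real_def)
    ultimately show ?thesis using that by (simp add: divide_le_eq)
  qed
  have pos: "eventually (\<lambda>h. 0 < h) (at_right (0::real))" by (rule eventually_at_right_less)
  have "0 \<le> R h \<and> R h \<le> B" "0 \<le> L h \<and> L h \<le> B" if "0 < h" for h
    using quotient_bounds[of x "x + h"] quotient_bounds[of "x - h" x] that
    by (simp_all add: R_def L_def)
  then have bounds: "eventually (\<lambda>h. 0 \<le> R h \<and> R h \<le> B) (at_right 0)"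
    "eventually (\<lambda>h. 0 \<le> L h \<and> L h \<le> B) (at_right 0)"
    by (simp_all add: eventually_mono[OF pos])
  have RL: "Limsup (at_right 0) (\<lambda>h. ereal (R h)) \<le> Liminf (at_right 0) (\<lambda>h. ereal (L h))"
    using right bounds(2)
      by (intro Limsup_le_Liminf_of_rat_gaps)
        (auto simp: dini_gap_def R_def L_def elim: eventually_mono)
  \<comment> \<open>the reflection \<open>y \<mapsto> - G (- y)\<close> exchanges left and right difference quotients\<close>
  have LR: "Limsup (at_right 0) (\<lambda>h. ereal (L h)) \<le> Liminf (at_right 0) (\<lambda>h. ereal (R h))"
    using left bounds(1) by (intro Limsup_le_Liminf_of_rat_gaps)
      (auto simp: dini_gap_def R_def L_def algebra_simps elim: eventually_mono)
  obtain D where "(R \<longlongrightarrow> D) (at_right 0)" "(L \<longlongrightarrow> D) (at_right 0)"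
    by (rule tendsto_common_of_Limsup_le_Liminf[OF _ RL LR bounds(1)]) simp_all
  then show ?thesis unfolding R_def L_def by (blast intro: DERIV_of_one_sided_quotients)
qed

lemma negligible_uminus_image:
  fixes S :: "real set"
  assumes "negligible S" shows "negligible (uminus ` S)"
  by (rule negligible_differentiable_image_negligible[OF order_refl assms])
     (intro differentiable_on_minus differentiable_on_id[unfolded id_def])

lemma mono_lipschitz_differentiable_ae:
  fixes G :: "real \<Rightarrow> real"
  assumes G: "mono G" "B-lipschitz_on UNIV G"
  shows "negligible {x. \<nexists>D. (G has_real_derivative D) (at x)}"
proof -
  define H where "H y = - G (- y)" for y
  define P where "P = {(p, q). p \<in> \<rat> \<and> q \<in> \<rat> \<and> 0 < p \<and> p < (q::real)}"
  have G_cont: "continuous_on UNIV G" using G(2) by (rule lipschitz_on_continuous_on)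
  have "continuous_on UNIV (\<lambda>y. G (- y))"
    by (rule continuous_on_compose2[OF G_cont]) (auto intro: continuous_intros)
  then have H: "mono H" "continuous_on UNIV H"
    using G(1) by (auto simp: H_def mono_def intro: continuous_intros)
  have "countable P"
    by (rule countable_subset[of _ "\<rat> \<times> \<rat>"]) (auto simp: P_def intro: countable_SIGMA countable_rat)
  then have "negligible (\<Union>(p, q)\<in>P. dini_gap G p q \<union> uminus ` dini_gap H p q)"
    by (intro negligible_countable_Union countable_image)
       (auto simp: P_def intro!: negligible_dini_gap negligible_uminus_image G(1) G_cont H)
  moreover have "{x. \<nexists>D. (G has_real_derivative D) (at x)} \<subseteq>
      (\<Union>(p, q)\<in>P. dini_gap G p q \<union> uminus ` dini_gap H p q)"
  proof (rule subsetI, rule ccontr)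
    fix x assume nondiff: "x \<in> {x. \<nexists>D. (G has_real_derivative D) (at x)}"
      and "x \<notin> (\<Union>(p, q)\<in>P. dini_gap G p q \<union> uminus ` dini_gap H p q)"
    then have gap_G: "x \<notin> dini_gap G p q" and gap_H: "x \<notin> uminus ` dini_gap H p q"
      if "p \<in> \<rat>" "q \<in> \<rat>" "0 < p" "p < q" for p q
      using that by (auto simp: P_def)
    have "-x \<notin> dini_gap H p q"
      if "p \<in> \<rat>" "q \<in> \<rat>" "0 < p" "p < q" for p q
      using gap_H[OF that] image_eqI[of x uminus "-x" "dini_gap H p q"] by auto
    with mono_lipschitz_DERIV_off_dini_gaps[OF G gap_G] nondiff show False
      unfolding H_def by blast
  qed
  ultimately show ?thesis by (rule negligible_subset)
qed

lemma lipschitz_differentiable_ae: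
  fixes F :: "real \<Rightarrow> real"
  assumes F: "C-lipschitz_on UNIV F"
  shows "negligible {x. \<nexists>D. (F has_real_derivative D) (at x)}"
proof -
  define G where "G x = F x + C * x" for x
  have C: "0 \<le> C" using F by (rule lipschitz_on_nonneg)
  have "mono G"
  proof (rule monoI)
    fix x y :: real assume "x \<le> y"
    moreover have "F x - F y \<le> C * (y - x)"
      using lipschitz_onD[OF F, of x y] \<open>x \<le> y\<close> by (simp add: dist_real_def abs_le_iff)
    ultimately show "G x \<le> G y" by (simp add: G_def algebra_simps)
  qed
  moreover have "(C + C * 1)-lipschitz_on UNIV G"
    unfolding G_def using C
      by (intro lipschitz_on_add F lipschitz_on_cmult_real_nonneg lipschitz_on_id)
  ultimately have "negligible {x. \<nexists>D. (G has_real_derivative D) (at x)}"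
    by (rule mono_lipschitz_differentiable_ae)
  moreover have "(F has_real_derivative D - C * 1) (at x)"
    if "(G has_real_derivative D) (at x)" for x D
  proof -
    have "((\<lambda>x. G x - C * x) has_real_derivative D - C * 1) (at x)"
      by (intro DERIV_diff that DERIV_cmult DERIV_ident)
    then show ?thesis by (simp add: G_def)
  qed
  then have "{x. \<nexists>D. (F has_real_derivative D) (at x)} \<subseteq> {x. \<nexists>D. (G has_real_derivative D) (at x)}"
    by blast
  ultimately show ?thesis by (rule negligible_subset)
qed

section \<open>The fundamental theorem of calculus for Lipschitz functions\<close>

lemma lipschitz_on_clamp_extension:
  fixes f :: "real \<Rightarrow> real"
  assumes ab: "a \<le> b" and f: "C-lipschitz_on {a..b} f"
  shows "C-lipschitz_on UNIV (\<lambda>x. f (max a (min b x)))"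
proof (rule lipschitz_onI)
  fix x y :: real
  have "dist (f (max a (min b x))) (f (max a (min b y)))
      \<le> C * dist (max a (min b x)) (max a (min b y))"
    using ab by (intro lipschitz_onD[OF f]) auto
  also have "\<dots> \<le> C * dist x y"
    using lipschitz_on_nonneg[OF f]
    by (intro mult_left_mono) (auto simp: dist_real_def max_def min_def abs_le_iff)
  finally show "dist (f (max a (min b x))) (f (max a (min b y))) \<le> C * dist x y" .
qed (rule lipschitz_on_nonneg[OF f])

text \<open>Where \<open>f\<close> has no derivative, \<open>vector_derivative\<close> is an unspecified value; off the null
  set \<open>N\<close> it is the genuine two-sided derivative.\<close>

lemma lipschitz_on_interval_DERIV_ae:
  fixes f :: "real \<Rightarrow> real"
  assumes f: "C-lipschitz_on {a..b} f" and ab: "a < b"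
  obtains N where "negligible N" "a \<in> N" "b \<in> N"
    "\<And>x. x \<in> {a..b} - N \<Longrightarrow> (f has_real_derivative vector_derivative f (at x within {a..b})) (at x)"
proof
  let ?F = "\<lambda>x. f (max a (min b x))"
  show "negligible ({x. \<nexists>D. (?F has_real_derivative D) (at x)} \<union> {a, b})"
    using ab f
    by (intro negligible_Un lipschitz_differentiable_ae lipschitz_on_clamp_extension) auto
  fix x assume x: "x \<in> {a..b} - ({x. \<nexists>D. (?F has_real_derivative D) (at x)} \<union> {a, b})"
  then obtain D where D: "(?F has_real_derivative D) (at x)" and x_inner: "x \<in> {a<..<b}" by auto
  have "(f has_real_derivative D) (at x)"
    by (rule has_field_derivative_transform_within_open[OF D, of "{a<..<b}"]) (use x_inner in auto)
  moreover have "vector_derivative f (at x within {a..b}) = D"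
    using calculation ab x_inner
    by (intro vector_derivative_within_closed_interval)
       (auto simp: has_real_derivative_iff_has_vector_derivative has_vector_derivative_at_within)
  ultimately show "(f has_real_derivative vector_derivative f (at x within {a..b})) (at x)" by simp
qed auto

lemma has_integral_Diff_negligible:
  fixes f :: "'n::euclidean_space \<Rightarrow> 'a::banach"
  assumes "negligible N"
  shows "(f has_integral y) (T - N) \<longleftrightarrow> (f has_integral y) T"
  by (rule has_integral_spike_set_eq) (auto intro: negligible_subset[OF assms])

lemma integrable_on_Diff_negligible:
  fixes f :: "'n::euclidean_space \<Rightarrow> 'a::banach"
  assumes "negligible N" shows "f integrable_on (T - N) \<longleftrightarrow> f integrable_on T"
  unfolding integrable_on_def has_integral_Diff_negligible[OF assms] ..

lemma integral_Diff_negligible: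
  fixes f :: "'n::euclidean_space \<Rightarrow> 'a::banach"
  assumes "negligible N" shows "integral (T - N) f = integral T f"
  by (rule integral_spike_set) (auto intro: negligible_subset[OF assms])

definition forward_quotient :: "(real \<Rightarrow> real) \<Rightarrow> nat \<Rightarrow> real \<Rightarrow> real" where
  "forward_quotient F m x = (F (x + 1 / real (Suc m)) - F x) * real (Suc m)"

lemma continuous_on_forward_quotient:
  assumes "continuous_on UNIV F" shows "continuous_on S (forward_quotient F m)"
  unfolding forward_quotient_def
  by (intro continuous_intros continuous_on_compose2[OF assms]) auto

lemma abs_forward_quotient_le:
  assumes "C-lipschitz_on UNIV F" shows "\<bar>forward_quotient F m x\<bar> \<le> C"
proof -
  have "\<bar>F (x + 1 / real (Suc m)) - F x\<bar> \<le> C * (1 / real (Suc m))"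
    using lipschitz_onD[OF assms, of "x + 1 / real (Suc m)" x] by (simp add: dist_real_def)
  then have "\<bar>F (x + 1 / real (Suc m)) - F x\<bar> * real (Suc m)
      \<le> C * (1 / real (Suc m)) * real (Suc m)"
    by (rule mult_right_mono) simp
  then show ?thesis by (simp add: forward_quotient_def abs_mult)
qed

lemma forward_quotient_tendsto:
  assumes "(F has_real_derivative D) (at x)"
  shows "(\<lambda>m. forward_quotient F m x) \<longlonglongrightarrow> D"
proof -
  have "(\<lambda>m. x + 1 / real (Suc m)) \<longlonglongrightarrow> x"
    using LIMSEQ_inverse_real_of_nat_add[of x] by (simp add: inverse_eq_divide)
  then have "filterlim (\<lambda>m. x + 1 / real (Suc m)) (at x) sequentially"
    by (rule filterlim_atI) simp
  from filterlim_compose[OF assms[unfolded has_field_derivative_iff] this]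
  show ?thesis by (simp add: forward_quotient_def divide_inverse)
qed

lemma integral_forward_quotient_tendsto:
  fixes F :: "real \<Rightarrow> real"
  assumes F: "continuous_on UNIV F" and ab: "a \<le> b"
  shows "(\<lambda>m. integral {a..b} (forward_quotient F m)) \<longlonglongrightarrow> F b - F a"
proof -
  \<comment> \<open>starting the antiderivative at \<open>a - 1\<close> makes it differentiable at \<open>a\<close> from both sides\<close>
  define \<Phi> where "\<Phi> y = integral {a - 1..y} F" for y
  have \<Phi>: "(\<Phi> has_real_derivative F y) (at y)" if "a - 1 < y" for y
  proof -
    have "(\<Phi> has_real_derivative F y) (at y within {a - 1..y + 1})"
      unfolding \<Phi>_def using that
      by (intro integral_has_real_derivative continuous_on_subset[OF F]) auto
    moreover have "at y within {a - 1..y + 1} = at y"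
      using that by (intro at_within_interior) auto
    ultimately show ?thesis by simp
  qed
  have "integral {a..b} (forward_quotient F m)
      = forward_quotient \<Phi> m b - forward_quotient \<Phi> m a" for m
  proof -
    let ?t = "1 / real (Suc m)"
    have "((\<lambda>u. F (u + ?t) - F u) has_integral (\<Phi> (b + ?t) - \<Phi> b) - (\<Phi> (a + ?t) - \<Phi> a)) {a..b}"
    proof (rule fundamental_theorem_of_calculus[OF ab])
      fix u assume "u \<in> {a..b}"
      then have "a - 1 < u" by simp
      moreover have "0 < ?t" by simp
      ultimately have "a - 1 < u + ?t" "a - 1 < u" by linarith+
      then have "((\<lambda>u. \<Phi> (u + ?t) - \<Phi> u) has_real_derivative F (u + ?t) - F u) (at u)"
        by (intro DERIV_diff \<Phi> DERIV_shift[THEN iffD1])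
      then show "((\<lambda>u. \<Phi> (u + ?t) - \<Phi> u) has_vector_derivative F (u + ?t) - F u)
          (at u within {a..b})"
        by (simp add: has_real_derivative_iff_has_vector_derivative has_vector_derivative_at_within)
    qed
    from has_integral_mult_left[OF this, of "real (Suc m)"] show ?thesis
      unfolding forward_quotient_def by (simp add: integral_unique algebra_simps)
  qed
  moreover have "(\<lambda>m. forward_quotient \<Phi> m b - forward_quotient \<Phi> m a) \<longlonglongrightarrow> F b - F a"
    using ab by (intro tendsto_diff forward_quotient_tendsto \<Phi>) auto
  ultimately show ?thesis by simp
qed

lemma lipschitz_on_interval_quotient_limit:
  fixes f :: "real \<Rightarrow> real"
  assumes f: "C-lipschitz_on {a..b} f" and ab: "a < b"
  obtains F N where "C-lipschitz_on UNIV F" "\<And>x. x \<in> {a..b} \<Longrightarrow> F x = f x" "negligible N"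
    "\<And>x. x \<in> {a..b} - N \<Longrightarrow>
      (\<lambda>m. forward_quotient F m x) \<longlonglongrightarrow> vector_derivative f (at x within {a..b})"
proof -
  obtain N where N: "negligible N" "a \<in> N" "b \<in> N"
    "\<And>x. x \<in> {a..b} - N \<Longrightarrow> (f has_real_derivative vector_derivative f (at x within {a..b})) (at x)"
    by (rule lipschitz_on_interval_DERIV_ae[OF f ab]) blast
  let ?F = "\<lambda>x. f (max a (min b x))"
  show ?thesis
  proof (rule that[of ?F N])
    show "C-lipschitz_on UNIV ?F" using ab f by (intro lipschitz_on_clamp_extension) auto
    show "?F x = f x" if "x \<in> {a..b}" for x using that by simp
    fix x assume x: "x \<in> {a..b} - N"
    then have "x \<in> {a<..<b}" using N(2,3) by (auto simp: less_le)
    then have "(?F has_real_derivative vector_derivative f (at x within {a..b})) (at x)"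
      by (intro has_field_derivative_transform_within_open[OF N(4)[OF x], of "{a<..<b}"]) auto
    then show "(\<lambda>m. forward_quotient ?F m x) \<longlonglongrightarrow> vector_derivative f (at x within {a..b})"
      by (rule forward_quotient_tendsto)
  qed (rule N(1))
qed

lemma lipschitz_on_interval_has_integral_derivative:
  fixes f :: "real \<Rightarrow> real"
  assumes f: "C-lipschitz_on {a..b} f" and ab: "a < b"
  shows "((\<lambda>x. vector_derivative f (at x within {a..b})) has_integral f b - f a) {a..b}"
proof -
  obtain F N where F: "C-lipschitz_on UNIV F" "\<And>x. x \<in> {a..b} \<Longrightarrow> F x = f x"
    and N: "negligible N" and lim: "\<And>x. x \<in> {a..b} - N \<Longrightarrow>
      (\<lambda>m. forward_quotient F m x) \<longlonglongrightarrow> vector_derivative f (at x within {a..b})"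
    by (rule lipschitz_on_interval_quotient_limit[OF f ab]) blast
  have "continuous_on UNIV F" using F(1) by (rule lipschitz_on_continuous_on)
  then have int: "forward_quotient F m integrable_on ({a..b} - N)" for m
    by (simp add: integrable_on_Diff_negligible[OF N] integrable_continuous_real
        continuous_on_forward_quotient)
  have "(\<lambda>x. C) integrable_on ({a..b} - N)"
    by (simp add: integrable_on_Diff_negligible[OF N] integrable_const_ivl)
  moreover have "norm (forward_quotient F m x) \<le> C" if "x \<in> {a..b} - N" for m x
    using abs_forward_quotient_le[OF F(1)] by simp
  ultimately have dc: "(\<lambda>x. vector_derivative f (at x within {a..b})) integrable_on ({a..b} - N)"
    "(\<lambda>m. integral ({a..b} - N) (forward_quotient F m))
      \<longlonglongrightarrow> integral ({a..b} - N) (\<lambda>x. vector_derivative f (at x within {a..b}))"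
    using dominated_convergence[OF int _ _ lim] by blast+
  have "(\<lambda>m. integral {a..b} (forward_quotient F m))
      \<longlonglongrightarrow> integral {a..b} (\<lambda>x. vector_derivative f (at x within {a..b}))"
    using dc(2) unfolding integral_Diff_negligible[OF N] .
  moreover have "(\<lambda>m. integral {a..b} (forward_quotient F m)) \<longlonglongrightarrow> f b - f a"
    using integral_forward_quotient_tendsto[OF \<open>continuous_on UNIV F\<close>, of a b] ab F(2) by simp
  ultimately have "integral {a..b} (\<lambda>x. vector_derivative f (at x within {a..b})) = f b - f a"
    by (rule LIMSEQ_unique)
  moreover have "(\<lambda>x. vector_derivative f (at x within {a..b})) integrable_on {a..b}"
    using dc(1) unfolding integrable_on_Diff_negligible[OF N] .
  ultimately show ?thesis by (simp add: has_integral_integral)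
qed

lemma lipschitz_on_interval_weighted_derivative_sq_integrable:
  fixes f w :: "real \<Rightarrow> real"
  assumes f: "C-lipschitz_on {a..b} f" and ab: "a < b" and w: "continuous_on {a..b} w"
  shows "(\<lambda>x. w x * (vector_derivative f (at x within {a..b}))\<^sup>2) integrable_on {a..b}"
proof -
  obtain F N where F: "C-lipschitz_on UNIV F" and N: "negligible N" and lim: "\<And>x. x \<in> {a..b} - N \<Longrightarrow>
      (\<lambda>m. forward_quotient F m x) \<longlonglongrightarrow> vector_derivative f (at x within {a..b})"
    by (rule lipschitz_on_interval_quotient_limit[OF f ab]) blast
  obtain M where M: "\<And>x. x \<in> {a..b} \<Longrightarrow> \<bar>w x\<bar> \<le> M"
    using continuous_on_compact_bound[OF compact_Icc w] by auto
  have "continuous_on UNIV F" using F by (rule lipschitz_on_continuous_on)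
  then have int: "(\<lambda>x. w x * (forward_quotient F m x)\<^sup>2) integrable_on ({a..b} - N)" for m
    by (simp add: integrable_on_Diff_negligible[OF N] integrable_continuous_real
        continuous_on_forward_quotient continuous_intros w)
  have bound: "norm (w x * (forward_quotient F m x)\<^sup>2) \<le> M * C\<^sup>2" if "x \<in> {a..b} - N" for m x
  proof -
    have "(forward_quotient F m x)\<^sup>2 \<le> C\<^sup>2"
      using power_mono[OF abs_forward_quotient_le[OF F, of m x] abs_ge_zero, of 2] by simp
    then show ?thesis using M[of x] that by (simp add: abs_mult mult_mono)
  qed
  have const: "(\<lambda>x. M * C\<^sup>2) integrable_on ({a..b} - N)"
    by (simp add: integrable_on_Diff_negligible[OF N] integrable_const_ivl)
  have conv: "(\<lambda>m. w x * (forward_quotient F m x)\<^sup>2)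
      \<longlonglongrightarrow> w x * (vector_derivative f (at x within {a..b}))\<^sup>2" if "x \<in> {a..b} - N" for x
    by (intro tendsto_mult tendsto_const tendsto_power lim that)
  have "(\<lambda>x. w x * (vector_derivative f (at x within {a..b}))\<^sup>2) integrable_on ({a..b} - N)"
    by (rule dominated_convergence(1)[OF int const bound conv])
  then show ?thesis by (simp add: integrable_on_Diff_negligible[OF N])
qed

section \<open>A weighted Wirtinger inequality\<close>

lemma lipschitz_on_mult_bounded:
  fixes u v :: "real \<Rightarrow> real"
  assumes u: "A-lipschitz_on S u" "\<And>x. x \<in> S \<Longrightarrow> \<bar>u x\<bar> \<le> U" "0 \<le> U"
    and v: "B-lipschitz_on S v" "\<And>x. x \<in> S \<Longrightarrow> \<bar>v x\<bar> \<le> V" "0 \<le> V"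
  shows "(U * B + V * A)-lipschitz_on S (\<lambda>x. u x * v x)"
proof (rule lipschitz_onI)
  show "0 \<le> U * B + V * A"
    using lipschitz_on_nonneg[OF u(1)] lipschitz_on_nonneg[OF v(1)] u(3) v(3) by simp
  fix x y assume x: "x \<in> S" and y: "y \<in> S"
  have "\<bar>u x * v x - u y * v y\<bar> = \<bar>u x * (v x - v y) + v y * (u x - u y)\<bar>"
    by (simp add: algebra_simps)
  also have "\<dots> \<le> \<bar>u x\<bar> * \<bar>v x - v y\<bar> + \<bar>v y\<bar> * \<bar>u x - u y\<bar>"
    by (metis abs_mult abs_triangle_ineq)
  also have "\<dots> \<le> U * (B * \<bar>x - y\<bar>) + V * (A * \<bar>x - y\<bar>)"
    using lipschitz_onD[OF u(1) x y] lipschitz_onD[OF v(1) x y] u(2)[OF x] v(2)[OF y] u(3) v(3)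
    by (intro add_mono mult_mono) (auto simp: dist_real_def)
  finally show "dist (u x * v x) (u y * v y) \<le> (U * B + V * A) * dist x y"
    by (simp add: dist_real_def algebra_simps)
qed

lemma lipschitz_on_compact_mult:
  fixes u v :: "real \<Rightarrow> real"
  assumes S: "compact S" and u: "A-lipschitz_on S u" and v: "B-lipschitz_on S v"
  obtains C where "C-lipschitz_on S (\<lambda>x. u x * v x)"
proof -
  obtain U where U: "0 \<le> U" "\<And>x. x \<in> S \<Longrightarrow> norm (u x) \<le> U"
    using continuous_on_compact_bound[OF S lipschitz_on_continuous_on[OF u]] by blast
  obtain V where V: "0 \<le> V" "\<And>x. x \<in> S \<Longrightarrow> norm (v x) \<le> V"
    using continuous_on_compact_bound[OF S lipschitz_on_continuous_on[OF v]] by blast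
  have "(U * B + V * A)-lipschitz_on S (\<lambda>x. u x * v x)"
    by (rule lipschitz_on_mult_bounded[OF u _ U(1) v _ V(1)]) (use U(2) V(2) in auto)
  then show ?thesis by (rule that)
qed

lemma lipschitz_on_interval_continuous_derivative:
  fixes h h' :: "real \<Rightarrow> real"
  assumes h: "\<And>x. x \<in> {a..b} \<Longrightarrow> (h has_real_derivative h' x) (at x within {a..b})"
    and h': "continuous_on {a..b} h'"
  obtains B where "B-lipschitz_on {a..b} h"
proof -
  obtain B where B: "0 \<le> B" "\<And>x. x \<in> {a..b} \<Longrightarrow> norm (h' x) \<le> B"
    using continuous_on_compact_bound[OF compact_Icc h'] by blast
  have "B-lipschitz_on {a..b} h"
  proof (rule lipschitz_onI)
    fix x y assume "x \<in> {a..b}" "y \<in> {a..b}"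
    then have "norm (h x - h y) \<le> B * norm (x - y)"
      by (intro field_differentiable_bound[of "{a..b}" h h' B] h B(2)) auto
    then show "dist (h x) (h y) \<le> B * dist x y" by (simp add: dist_real_def)
  qed (rule B(1))
  then show ?thesis by (rule that)
qed

lemma riccati_tan_solution:
  fixes g :: "real \<Rightarrow> real"
  assumes g: "continuous_on {a..b} g" "\<And>x. x \<in> {a..b} \<Longrightarrow> 0 < g x"
    and k: "0 < k" "k * integral {a..b} g < pi"
  obtains h where
    "\<And>x. x \<in> {a..b} \<Longrightarrow> (h has_real_derivative g x * (k\<^sup>2 + (h x)\<^sup>2)) (at x within {a..b})"
proof
  let ?M = "integral {a..b} g"
  define \<theta> where "\<theta> x = k * integral {a..x} g - k * ?M / 2" for x
  have g_int: "g integrable_on {c..d}" if "{c..d} \<subseteq> {a..b}" for c d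
    using g(1) that by (intro integrable_continuous_real) (rule continuous_on_subset)
  have g_nonneg: "0 \<le> g x" if "x \<in> {a..b}" for x using g(2)[OF that] by simp
  fix x assume x: "x \<in> {a..b}"
  have "0 \<le> integral {a..x} g" "0 \<le> integral {x..b} g"
    using x by (auto intro!: integral_nonneg g_int g_nonneg)
  moreover have "integral {a..x} g + integral {x..b} g = ?M"
    using x by (intro Henstock_Kurzweil_Integration.integral_combine g_int) auto
  ultimately have "0 \<le> k * integral {a..x} g" "k * integral {a..x} g \<le> k * ?M"
    using k(1) by (simp_all add: mult_left_mono)
  then have "-(pi/2) < \<theta> x" "\<theta> x < pi/2"
    using k(2) by (simp_all add: \<theta>_def)
  then have cos_pos: "0 < cos (\<theta> x)" by (rule cos_gt_zero_pi)
  have "(\<theta> has_real_derivative k * g x) (at x within {a..b})"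
    unfolding \<theta>_def using integral_has_real_derivative[OF g(1) x]
    by (auto intro!: derivative_eq_intros)
  from DERIV_chain2[OF DERIV_tan this] cos_pos
  have "((\<lambda>x. k * tan (\<theta> x)) has_real_derivative k * (inverse ((cos (\<theta> x))\<^sup>2) * (k * g x)))
      (at x within {a..b})"
    by (intro DERIV_cmult) simp
  moreover have "k * (inverse ((cos (\<theta> x))\<^sup>2) * (k * g x)) = g x * (k\<^sup>2 + (k * tan (\<theta> x))\<^sup>2)"
  proof -
    have "inverse ((cos (\<theta> x))\<^sup>2) = 1 + (tan (\<theta> x))\<^sup>2"
      using tan_sec[of "\<theta> x"] cos_pos by (simp add: power_inverse)
    then show ?thesis by (simp add: power2_eq_square algebra_simps)
  qed
  ultimately show "((\<lambda>x. k * tan (\<theta> x)) has_real_derivative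
      g x * (k\<^sup>2 + (k * tan (\<theta> x))\<^sup>2)) (at x within {a..b})"
    by simp
qed

lemma picone_inequality_pointwise:
  fixes g k h p d :: real
  assumes "0 < g"
  shows "k\<^sup>2 * (p\<^sup>2 * g) - (g * (k\<^sup>2 + h\<^sup>2) * p\<^sup>2 + 2 * h * p * d) \<le> d\<^sup>2 / g"
proof -
  have "d\<^sup>2 / g - (k\<^sup>2 * (p\<^sup>2 * g) - (g * (k\<^sup>2 + h\<^sup>2) * p\<^sup>2 + 2 * h * p * d)) = (d + g * h * p)\<^sup>2 / g"
    using assms by (simp add: field_simps power2_eq_square)
  moreover have "0 \<le> (d + g * h * p)\<^sup>2 / g" using assms by simp
  ultimately show ?thesis by linarith
qed

lemma picone_inequality_ae:
  fixes g h \<phi> :: "real \<Rightarrow> real"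
  assumes ab: "a < b" and g: "\<And>x. x \<in> {a..b} \<Longrightarrow> 0 < g x"
    and h: "\<And>x. x \<in> {a..b} \<Longrightarrow> (h has_real_derivative g x * (k\<^sup>2 + (h x)\<^sup>2)) (at x within {a..b})"
    and \<phi>: "C-lipschitz_on {a..b} \<phi>" and \<psi>: "D-lipschitz_on {a..b} (\<lambda>x. h x * (\<phi> x * \<phi> x))"
  obtains N where "negligible N" "\<And>x. x \<in> {a..b} - N \<Longrightarrow>
    k\<^sup>2 * ((\<phi> x)\<^sup>2 * g x) - vector_derivative (\<lambda>x. h x * (\<phi> x * \<phi> x)) (at x within {a..b})
      \<le> (vector_derivative \<phi> (at x within {a..b}))\<^sup>2 / g x"
proof -
  let ?d\<phi> = "\<lambda>x. vector_derivative \<phi> (at x within {a..b})"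
  let ?\<psi> = "\<lambda>x. h x * (\<phi> x * \<phi> x)"
  let ?d\<psi> = "\<lambda>x. vector_derivative ?\<psi> (at x within {a..b})"
  obtain N1 where N1: "negligible N1" "a \<in> N1" "b \<in> N1"
      "\<And>x. x \<in> {a..b} - N1 \<Longrightarrow> (\<phi> has_real_derivative ?d\<phi> x) (at x)"
    by (rule lipschitz_on_interval_DERIV_ae[OF \<phi> ab]) blast
  obtain N2 where N2: "negligible N2"
      "\<And>x. x \<in> {a..b} - N2 \<Longrightarrow> (?\<psi> has_real_derivative ?d\<psi> x) (at x)"
    by (rule lipschitz_on_interval_DERIV_ae[OF \<psi> ab]) blast
  have "k\<^sup>2 * ((\<phi> x)\<^sup>2 * g x) - ?d\<psi> x \<le> (?d\<phi> x)\<^sup>2 / g x"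
    if x: "x \<in> {a..b} - (N1 \<union> N2)" for x
  proof -
    have "x \<in> {a<..<b}" using x N1(2,3) by (auto simp: less_le)
    then have "at x within {a..b} = at x" by (intro at_within_interior) auto
    moreover have "(h has_real_derivative g x * (k\<^sup>2 + (h x)\<^sup>2)) (at x within {a..b})"
      using h x by blast
    ultimately have "(h has_real_derivative g x * (k\<^sup>2 + (h x)\<^sup>2)) (at x)" by simp
    from DERIV_mult[OF this DERIV_mult[OF N1(4) N1(4)]] x
    have "(?\<psi> has_real_derivative g x * (k\<^sup>2 + (h x)\<^sup>2) * (\<phi> x * \<phi> x)
        + (?d\<phi> x * \<phi> x + ?d\<phi> x * \<phi> x) * h x) (at x)" by auto
    then have "?d\<psi> x = g x * (k\<^sup>2 + (h x)\<^sup>2) * (\<phi> x)\<^sup>2 + 2 * h x * \<phi> x * ?d\<phi> x"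
      using N2(2) x by (auto simp: power2_eq_square algebra_simps intro: DERIV_unique)
    then show ?thesis using picone_inequality_pointwise[OF g] x by simp
  qed
  moreover have "negligible (N1 \<union> N2)" using N1(1) N2(1) by simp
  ultimately show ?thesis using that by blast
qed

lemma picone_integral_inequality:
  fixes g h \<phi> :: "real \<Rightarrow> real"
  assumes ab: "a < b" and g: "continuous_on {a..b} g" "\<And>x. x \<in> {a..b} \<Longrightarrow> 0 < g x"
    and h: "\<And>x. x \<in> {a..b} \<Longrightarrow> (h has_real_derivative g x * (k\<^sup>2 + (h x)\<^sup>2)) (at x within {a..b})"
    and \<phi>: "C-lipschitz_on {a..b} \<phi>" "\<phi> a = 0" "\<phi> b = 0"
  shows "k\<^sup>2 * integral {a..b} (\<lambda>x. (\<phi> x)\<^sup>2 * g x)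
    \<le> integral {a..b} (\<lambda>x. (vector_derivative \<phi> (at x within {a..b}))\<^sup>2 / g x)"
proof -
  let ?d\<phi> = "\<lambda>x. vector_derivative \<phi> (at x within {a..b})"
  let ?\<psi> = "\<lambda>x. h x * (\<phi> x * \<phi> x)"
  let ?d\<psi> = "\<lambda>x. vector_derivative ?\<psi> (at x within {a..b})"
  have "continuous_on {a..b} h"
    unfolding continuous_on_eq_continuous_within using h by (blast intro: DERIV_continuous)
  with g(1) have "continuous_on {a..b} (\<lambda>x. g x * (k\<^sup>2 + (h x)\<^sup>2))"
    by (intro continuous_intros)
  then obtain Ch where "Ch-lipschitz_on {a..b} h"
    using lipschitz_on_interval_continuous_derivative[OF h] by blast
  moreover obtain C2 where "C2-lipschitz_on {a..b} (\<lambda>x. \<phi> x * \<phi> x)"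
    using lipschitz_on_compact_mult[OF compact_Icc \<phi>(1) \<phi>(1)] by blast
  ultimately obtain C\<psi> where \<psi>: "C\<psi>-lipschitz_on {a..b} ?\<psi>"
    using lipschitz_on_compact_mult[OF compact_Icc] by blast
  obtain N where N: "negligible N"
    and pointwise: "\<And>x. x \<in> {a..b} - N \<Longrightarrow> k\<^sup>2 * ((\<phi> x)\<^sup>2 * g x) - ?d\<psi> x \<le> (?d\<phi> x)\<^sup>2 / g x"
    using picone_inequality_ae[OF ab g(2) h \<phi>(1) \<psi>] by auto
  have "((\<lambda>x. k\<^sup>2 * ((\<phi> x)\<^sup>2 * g x) - ?d\<psi> x) has_integral
      k\<^sup>2 * integral {a..b} (\<lambda>x. (\<phi> x)\<^sup>2 * g x) - (?\<psi> b - ?\<psi> a)) {a..b}"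
    using lipschitz_on_interval_has_integral_derivative[OF \<psi> ab]
      lipschitz_on_continuous_on[OF \<phi>(1)] g(1)
    by (intro has_integral_diff has_integral_mult_right integrable_integral
        integrable_continuous_real continuous_intros)
  then have "((\<lambda>x. k\<^sup>2 * ((\<phi> x)\<^sup>2 * g x) - ?d\<psi> x) has_integral
      k\<^sup>2 * integral {a..b} (\<lambda>x. (\<phi> x)\<^sup>2 * g x)) ({a..b} - N)"
    using \<phi>(2,3) by (simp add: has_integral_Diff_negligible[OF N])
  moreover have "g x \<noteq> 0" if "x \<in> {a..b}" for x using g(2)[OF that] by simp
  then have "(\<lambda>x. 1 / g x * (?d\<phi> x)\<^sup>2) integrable_on {a..b}"
    using g(1) by (intro lipschitz_on_interval_weighted_derivative_sq_integrable[OF \<phi>(1) ab]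
        continuous_intros) auto
  then have "((\<lambda>x. (?d\<phi> x)\<^sup>2 / g x) has_integral integral {a..b} (\<lambda>x. (?d\<phi> x)\<^sup>2 / g x))
      ({a..b} - N)"
    by (simp add: has_integral_Diff_negligible[OF N] integrable_integral)
  ultimately show ?thesis using pointwise by (rule has_integral_le)
qed

lemma integral_pos_continuous:
  fixes f :: "real \<Rightarrow> real"
  assumes ab: "a < b" and f: "continuous_on {a..b} f" "\<And>x. x \<in> {a..b} \<Longrightarrow> 0 \<le> f x"
    and x0: "x0 \<in> {a..b}" "f x0 \<noteq> 0"
  shows "0 < integral {a..b} f"
proof -
  have "0 \<le> integral {a..b} f" using f by (intro integral_nonneg integrable_continuous_real) auto
  moreover have "integral {a..b} f \<noteq> 0"
  proof
    assume "integral {a..b} f = 0"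
    then have "(f has_integral 0) (cbox a b)"
      using integrable_integral[OF integrable_continuous_real[OF f(1)]] by simp
    then have "f x0 = 0"
      using f ab x0(1) by (intro has_integral_0_cbox_imp_0[of a b f]) auto
    with x0(2) show False ..
  qed
  ultimately show ?thesis by simp
qed

lemma weighted_wirtinger_inequality:
  fixes g \<phi> :: "real \<Rightarrow> real"
  assumes ab: "a < b" and g: "continuous_on {a..b} g" "\<And>x. x \<in> {a..b} \<Longrightarrow> 0 < g x"
    and \<phi>: "C-lipschitz_on {a..b} \<phi>" "\<phi> a = 0" "\<phi> b = 0"
  shows "(pi / integral {a..b} g)\<^sup>2 * integral {a..b} (\<lambda>x. (\<phi> x)\<^sup>2 * g x)
    \<le> integral {a..b} (\<lambda>x. (vector_derivative \<phi> (at x within {a..b}))\<^sup>2 / g x)"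
proof -
  let ?c = "pi / integral {a..b} g"
  have "g a \<noteq> 0" "a \<in> {a..b}" using g(2)[of a] ab by auto
  moreover have "0 \<le> g x" if "x \<in> {a..b}" for x using g(2)[OF that] by simp
  ultimately have "0 < integral {a..b} g" by (intro integral_pos_continuous[OF ab g(1)])
  then have "0 < ?c" by simp
  have "eventually (\<lambda>k. k\<^sup>2 * integral {a..b} (\<lambda>x. (\<phi> x)\<^sup>2 * g x)
      \<le> integral {a..b} (\<lambda>x. (vector_derivative \<phi> (at x within {a..b}))\<^sup>2 / g x)) (at_left ?c)"
    unfolding eventually_at_left_field
  proof (intro exI[of _ 0] conjI allI impI)
    fix k assume "0 < k" "k < ?c"
    then have "k * integral {a..b} g < pi"
      using \<open>0 < integral {a..b} g\<close> by (simp add: pos_less_divide_eq)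
    with \<open>0 < k\<close> obtain h where h:
      "\<And>x. x \<in> {a..b} \<Longrightarrow> (h has_real_derivative g x * (k\<^sup>2 + (h x)\<^sup>2)) (at x within {a..b})"
      using riccati_tan_solution[OF g] by blast
    show "k\<^sup>2 * integral {a..b} (\<lambda>x. (\<phi> x)\<^sup>2 * g x)
        \<le> integral {a..b} (\<lambda>x. (vector_derivative \<phi> (at x within {a..b}))\<^sup>2 / g x)"
      using picone_integral_inequality[OF ab g h \<phi>] .
  qed (use \<open>0 < ?c\<close> in simp)
  moreover have "((\<lambda>k. k\<^sup>2 * integral {a..b} (\<lambda>x. (\<phi> x)\<^sup>2 * g x))
      \<longlongrightarrow> ?c\<^sup>2 * integral {a..b} (\<lambda>x. (\<phi> x)\<^sup>2 * g x)) (at_left ?c)"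
    by (intro tendsto_intros)
  ultimately show ?thesis
    by (intro tendsto_le[OF trivial_limit_at_left_real tendsto_const]) simp_all
qed

section \<open>The weighted fundamental frequency\<close>

lemma smooth_on_interval_continuous_on:
  assumes "smooth_on_interval a b f" shows "continuous_on {a..b} f"
proof -
  obtain D :: "nat \<Rightarrow> real \<Rightarrow> real" where D0: "\<forall>x\<in>{a..b}. D 0 x = f x"
    and D: "\<forall>k. \<forall>x\<in>{a..b}. (D k has_real_derivative D (Suc k) x) (at x within {a..b})"
    using assms unfolding smooth_on_interval_def by blast
  have "continuous_on {a..b} (D 0)"
    unfolding continuous_on_eq_continuous_within using D by (blast intro: DERIV_continuous)
  then show ?thesis by (rule continuous_on_eq) (use D0 in auto)
qed

lemma lipschitz_on_parabola: "0 \<le> L \<Longrightarrow> L-lipschitz_on {0..L} (\<lambda>x. x * (L - x :: real))"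
proof (rule lipschitz_onI)
  fix x y assume "0 \<le> L" "x \<in> {0..L}" "y \<in> {0..L}"
  then have "\<bar>x - y\<bar> * \<bar>L - x - y\<bar> \<le> \<bar>x - y\<bar> * L" by (intro mult_left_mono) auto
  moreover have "x * (L - x) - y * (L - y) = (x - y) * (L - x - y)" by (simp add: algebra_simps)
  ultimately show "dist (x * (L - x)) (y * (L - y)) \<le> L * dist x y"
    by (simp add: dist_real_def abs_mult mult.commute)
qed

lemma admissible_parabolas:
  assumes "1 \<le> n" "\<And>i. i < n \<Longrightarrow> 0 < L i"
  shows "admissible n L (\<lambda>i x. x * (L i - x))"
  unfolding admissible_def
proof (intro conjI allI impI)
  show "\<exists>C. C-lipschitz_on {0..L i} (\<lambda>x. x * (L i - x))" if "i < n" for i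
    using lipschitz_on_parabola[of "L i"] assms(2)[OF that] by auto
  have "0 < L 0" using assms by simp
  then have "L 0 / 2 \<in> {0..L 0}" "L 0 / 2 * (L 0 - L 0 / 2) \<noteq> 0" by auto
  then show "\<exists>i<n. \<exists>x\<in>{0..L i}. x * (L i - x) \<noteq> 0"
    using assms(1) by (intro exI[of _ 0] conjI bexI[of _ "L 0 / 2"]) auto
qed simp_all

lemma admissible_continuous_on_weighted_square:
  assumes "admissible n L \<phi>" "i < n" "continuous_on {0..L i} w"
  shows "continuous_on {0..L i} (\<lambda>x. (\<phi> i x)\<^sup>2 * w x)"
proof -
  obtain C where "C-lipschitz_on {0..L i} (\<phi> i)" using assms(1,2) unfolding admissible_def by blast
  then have "continuous_on {0..L i} (\<phi> i)" by (rule lipschitz_on_continuous_on)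
  then show ?thesis using assms(3) by (intro continuous_intros)
qed

definition dirichlet_energy ::
  "nat \<Rightarrow> (nat \<Rightarrow> real) \<Rightarrow> (nat \<Rightarrow> real \<Rightarrow> real) \<Rightarrow> (nat \<Rightarrow> real \<Rightarrow> real) \<Rightarrow> real" where
  "dirichlet_energy n L g \<phi> =
     (\<Sum>i<n. integral {0..L i} (\<lambda>x. (vector_derivative (\<phi> i) (at x within {0..L i}))\<^sup>2 / g i x))"

definition weighted_mass ::
  "nat \<Rightarrow> (nat \<Rightarrow> real) \<Rightarrow> (nat \<Rightarrow> real \<Rightarrow> real) \<Rightarrow> (nat \<Rightarrow> real \<Rightarrow> real) \<Rightarrow> real" where
  "weighted_mass n L g \<phi> = (\<Sum>i<n. integral {0..L i} (\<lambda>x. (\<phi> i x)\<^sup>2 * g i x))"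

lemma weighted_fund_freq_eq:
  "weighted_fund_freq n L g =
     Inf {sqrt (dirichlet_energy n L g \<phi> / weighted_mass n L g \<phi>) | \<phi>. admissible n L \<phi>}"
  by (simp add: weighted_fund_freq_def dirichlet_energy_def weighted_mass_def)

lemma weighted_mass_pos:
  assumes \<phi>: "admissible n L \<phi>" and L: "\<And>i. i < n \<Longrightarrow> 0 < L i"
    and g: "\<And>i. i < n \<Longrightarrow> continuous_on {0..L i} (g i)"
      "\<And>i x. i < n \<Longrightarrow> x \<in> {0..L i} \<Longrightarrow> 0 < g i x"
  shows "0 < weighted_mass n L g \<phi>"
proof -
  have cont: "continuous_on {0..L i} (\<lambda>x. (\<phi> i x)\<^sup>2 * g i x)" if "i < n" for i
    using admissible_continuous_on_weighted_square[OF \<phi> that g(1)[OF that]] .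
  have nonneg: "0 \<le> (\<phi> i x)\<^sup>2 * g i x" if "i < n" "x \<in> {0..L i}" for i x
    using g(2)[OF that] by simp
  obtain i x where i: "i < n" "x \<in> {0..L i}" "\<phi> i x \<noteq> 0"
    using \<phi> unfolding admissible_def by blast
  show ?thesis
    unfolding weighted_mass_def
  proof (rule sum_pos2[of "{..<n}" i])
    show "0 < integral {0..L i} (\<lambda>x. (\<phi> i x)\<^sup>2 * g i x)"
      using i g(2)[OF i(1,2)] by (intro integral_pos_continuous[OF L cont nonneg]) auto
    show "0 \<le> integral {0..L j} (\<lambda>x. (\<phi> j x)\<^sup>2 * g j x)" if "j \<in> {..<n}" for j
      using that nonneg by (intro integral_nonneg integrable_continuous_real cont) auto
  qed (use i in auto)
qed

lemma dirichlet_energy_ge: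
  assumes \<phi>: "admissible n L \<phi>" and L: "\<And>i. i < n \<Longrightarrow> 0 < L i"
    and g: "\<And>i. i < n \<Longrightarrow> continuous_on {0..L i} (g i)"
      "\<And>i x. i < n \<Longrightarrow> x \<in> {0..L i} \<Longrightarrow> 0 < g i x"
  shows "(pi / (\<Sum>i<n. integral {0..L i} (g i)))\<^sup>2 * weighted_mass n L g \<phi> \<le> dirichlet_energy n L g \<phi>"
proof -
  let ?M = "\<Sum>i<n. integral {0..L i} (g i)"
  have g_pos: "0 < integral {0..L i} (g i)" if i: "i < n" for i
  proof (rule integral_pos_continuous[OF L[OF i] g(1)[OF i]])
    show "0 \<le> g i x" if "x \<in> {0..L i}" for x using g(2)[OF i that] by simp
    show "0 \<in> {0..L i}" "g i 0 \<noteq> 0" using g(2)[OF i, of 0] L[OF i] by auto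
  qed
  have "(pi / ?M)\<^sup>2 * integral {0..L i} (\<lambda>x. (\<phi> i x)\<^sup>2 * g i x)
      \<le> integral {0..L i} (\<lambda>x. (vector_derivative (\<phi> i) (at x within {0..L i}))\<^sup>2 / g i x)"
    if i: "i < n" for i
  proof -
    obtain C where "C-lipschitz_on {0..L i} (\<phi> i)" "\<phi> i 0 = 0" "\<phi> i (L i) = 0"
      using \<phi> i unfolding admissible_def by blast
    note wirtinger = weighted_wirtinger_inequality[OF L[OF i] g[OF i] this]
    have "integral {0..L i} (g i) \<le> ?M"
      using i g_pos by (intro member_le_sum) (auto intro: less_imp_le)
    then have "(pi / ?M)\<^sup>2 \<le> (pi / integral {0..L i} (g i))\<^sup>2"
      using g_pos[OF i] by (intro power_mono frac_le) auto
    moreover have "0 \<le> integral {0..L i} (\<lambda>x. (\<phi> i x)\<^sup>2 * g i x)"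
    proof (rule integral_nonneg)
      show "(\<lambda>x. (\<phi> i x)\<^sup>2 * g i x) integrable_on {0..L i}"
        by (rule integrable_continuous_real[OF
              admissible_continuous_on_weighted_square[OF \<phi> i g(1)[OF i]]])
      show "0 \<le> (\<phi> i x)\<^sup>2 * g i x" if "x \<in> {0..L i}" for x using g(2)[OF i that] by simp
    qed
    ultimately have "(pi / ?M)\<^sup>2 * integral {0..L i} (\<lambda>x. (\<phi> i x)\<^sup>2 * g i x)
        \<le> (pi / integral {0..L i} (g i))\<^sup>2 * integral {0..L i} (\<lambda>x. (\<phi> i x)\<^sup>2 * g i x)"
      by (rule mult_right_mono)
    then show ?thesis using wirtinger by (rule order_trans)
  qed
  then show ?thesis
    unfolding weighted_mass_def dirichlet_energy_def sum_distrib_left by (intro sum_mono) simp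
qed

theorem lemma3:
  fixes n :: nat and L :: "nat \<Rightarrow> real" and g :: "nat \<Rightarrow> real \<Rightarrow> real"
  assumes "n \<ge> 1"
    and "\<And>i. i < n \<Longrightarrow> L i > 0"
    and "\<And>i. i < n \<Longrightarrow> smooth_on_interval 0 (L i) (g i)"
    and "\<And>i x. i < n \<Longrightarrow> x \<in> {0..L i} \<Longrightarrow> g i x > 0"
  shows "weighted_fund_freq n L g \<ge> pi / (\<Sum>i<n. integral {0..L i} (g i))"
proof -
  let ?M = "\<Sum>i<n. integral {0..L i} (g i)"
  have g: "continuous_on {0..L i} (g i)" if "i < n" for i
    using assms(3)[OF that] by (rule smooth_on_interval_continuous_on)
  have "pi / ?M \<le> sqrt (dirichlet_energy n L g \<phi> / weighted_mass n L g \<phi>)"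
    if \<phi>: "admissible n L \<phi>" for \<phi>
  proof (rule real_le_rsqrt)
    have "0 < weighted_mass n L g \<phi>" by (rule weighted_mass_pos[OF \<phi> assms(2) g assms(4)])
    with dirichlet_energy_ge[OF \<phi> assms(2) g assms(4)]
    show "(pi / ?M)\<^sup>2 \<le> dirichlet_energy n L g \<phi> / weighted_mass n L g \<phi>"
      by (simp add: pos_le_divide_eq)
  qed
  moreover have "admissible n L (\<lambda>i x. x * (L i - x))" by (rule admissible_parabolas[OF assms(1,2)])
  ultimately show ?thesis unfolding weighted_fund_freq_eq by (intro cInf_greatest) auto
qed

end
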